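(* If $\mathcal{R}_{0}<1$, then the disease-free equilibrium $P^{\ast}=\left(\frac{\mu N^{2}}{p+\mu N},0,0,0,\frac{pN}{p+\mu N}\right)$ is globally asymptotically stable in $\Sigma=\{(S,E,I,R,V)\in\mathbb{R}_{+}^{5}:S+E+I+R+V=N\}$, i.e. every solution of the system below with initial datum in $\Sigma$ converges to $P^{\ast}$ as $t\to+\infty$ (and $P^{\ast}$ is stable).
   Context: Consider the SEIR model with vaccination and equal birth/death rate $\mu>0$: $S'=\mu N-\frac{\beta}{N}S(1-\rho)I-\frac{S}{N}p-\mu S$, $E'=\frac{\beta}{N}S(1-\rho)I-\sigma E-\mu E$, $I'=\sigma E-\gamma I-\mu I$, $R'=\gamma I-\mu R$, $V'=\frac{S}{N}p-\mu V$, where $N>0$ is the (constant) total population, $\beta,\sigma,\gamma>0$, $0<\rho<1$, the numbers of people vaccinated per day with the first and second dose are constants $\Delta_{1},\Delta_{2}\ge0$, the immunity fractions after each dose are $\pi_{1},\pi_{2}$, and $p=\Delta_{1}\pi_{1}+\Delta_{2}(\pi_{2}-\pi_{1})\ge0$. The set $\Sigma$ is positively invariant (nonnegative initial data give nonnegative solutions with $S+E+I+R+V=N$). The reproductive number is $\mathcal{R}_{0}=\frac{\mu N\sigma\beta(1-\rho)}{(\sigma+\mu)(\gamma+\mu)(p+\mu N)}$ (denoted $R_0$ in the paper, not to be confused with the initial value of $R$). *)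

theory Defs
  imports "HOL-Analysis.Analysis"
begin

type_synonym state = "real \<times> real \<times> real \<times> real \<times> real"
  (* (S, E, I, R, V); dist on this product type is the Euclidean distance *)

definition vacc_p :: "real \<Rightarrow> real \<Rightarrow> real \<Rightarrow> real \<Rightarrow> real" where
  "vacc_p \<Delta>1 \<Delta>2 \<pi>1 \<pi>2 = \<Delta>1 * \<pi>1 + \<Delta>2 * (\<pi>2 - \<pi>1)"

definition seirv_rhs ::
  "real \<Rightarrow> real \<Rightarrow> real \<Rightarrow> real \<Rightarrow> real \<Rightarrow> real \<Rightarrow> real \<Rightarrow> state \<Rightarrow> state" where
  "seirv_rhs \<mu> \<beta> \<sigma> \<gamma> \<rho> N p x =
     (case x of (S, E, I, R, V) \<Rightarrow>
       (\<mu> * N - \<beta> / N * S * (1 - \<rho>) * I - S / N * p - \<mu> * S,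
        \<beta> / N * S * (1 - \<rho>) * I - \<sigma> * E - \<mu> * E,
        \<sigma> * E - \<gamma> * I - \<mu> * I,
        \<gamma> * I - \<mu> * R,
        S / N * p - \<mu> * V))"

definition seirv_solution ::
  "real \<Rightarrow> real \<Rightarrow> real \<Rightarrow> real \<Rightarrow> real \<Rightarrow> real \<Rightarrow> real \<Rightarrow> (real \<Rightarrow> state) \<Rightarrow> bool" where
  "seirv_solution \<mu> \<beta> \<sigma> \<gamma> \<rho> N p x \<longleftrightarrow>
     (\<forall>t\<ge>0. (x has_vector_derivative seirv_rhs \<mu> \<beta> \<sigma> \<gamma> \<rho> N p (x t)) (at t within {0..}))"

definition Sigma_set :: "real \<Rightarrow> state set" where
  "Sigma_set N = {(S, E, I, R, V). S \<ge> 0 \<and> E \<ge> 0 \<and> I \<ge> 0 \<and> R \<ge> 0 \<and> V \<ge> 0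
                      \<and> S + E + I + R + V = N}"

definition R0 :: "real \<Rightarrow> real \<Rightarrow> real \<Rightarrow> real \<Rightarrow> real \<Rightarrow> real \<Rightarrow> real \<Rightarrow> real" where
  "R0 \<mu> \<beta> \<sigma> \<gamma> \<rho> N p =
     \<mu> * N * \<sigma> * \<beta> * (1 - \<rho>) / ((\<sigma> + \<mu>) * (\<gamma> + \<mu>) * (p + \<mu> * N))"

definition DFE :: "real \<Rightarrow> real \<Rightarrow> real \<Rightarrow> state" where
  "DFE \<mu> N p = (\<mu> * N^2 / (p + \<mu> * N), 0, 0, 0, p * N / (p + \<mu> * N))"

end

theory Submission
  imports Defs "HOL-Real_Asymp.Real_Asymp"
begin

text \<open>
  The vector field is quasi-positive, so perturbing every compartment by \<open>e * exp (r * t)\<close>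
  turns each first zero into a strict up-crossing; letting \<open>e \<rightarrow> 0\<close> shows that solutions stay
  nonnegative, and the total population \<open>n\<close> satisfies \<open>n' = \<mu> * (N - n)\<close>, so it stays \<open>N\<close>.
  Since \<open>S' \<le> (p / N + \<mu>) * (S\<^sup>* - S)\<close>, eventually \<open>S \<le> S\<^sup>* + \<theta>\<close>, and for
  \<open>\<R>\<^sub>0 < 1\<close> there are \<open>\<theta> > 0\<close> and \<open>c > 0\<close> such that \<open>W = E + c * I\<close> decays exponentially
  as long as \<open>S \<le> S\<^sup>* + \<theta>\<close>. Hence \<open>E, I \<rightarrow> 0\<close>, and \<open>S, R, V\<close> follow from linear
  comparison. Started with \<open>|S(0) - S\<^sup>*| < \<theta>\<close>, the same estimates bound the distance to the
  disease-free equilibrium linearly by the initial distance, which is stability.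
\<close>

section \<open>Linear differential inequalities\<close>

lemma DERIV_nonpos_imp_decreasing_within:
  fixes h :: "real \<Rightarrow> real"
  assumes "a \<le> b"
    and deriv: "\<And>s. a \<le> s \<Longrightarrow> s \<le> b \<Longrightarrow> (h has_real_derivative h' s) (at s within {a..b})"
    and nonpos: "\<And>s. a \<le> s \<Longrightarrow> s \<le> b \<Longrightarrow> h' s \<le> 0"
  shows "h b \<le> h a"
proof -
  obtain s where s: "s \<in> {a..b}" and "h b - h a = h' s * (b - a)"
    using mvt_very_simple[OF \<open>a \<le> b\<close>, of h "\<lambda>s. (*) (h' s)"] deriv
    by (auto simp: has_field_derivative_def)
  moreover have "h' s * (b - a) \<le> 0"
    using nonpos[of s] s \<open>a \<le> b\<close> by (auto intro: mult_nonpos_nonneg)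
  ultimately show ?thesis by simp
qed

lemma linear_differential_inequality:
  fixes f :: "real \<Rightarrow> real"
  assumes "a \<noteq> 0" "t0 \<le> t" "{t0..} \<subseteq> A"
    and deriv: "\<And>s. t0 \<le> s \<Longrightarrow> (f has_real_derivative f' s) (at s within A)"
    and le: "\<And>s. t0 \<le> s \<Longrightarrow> f' s \<le> - a * f s + G"
  shows "f t \<le> G / a + (f t0 - G / a) * exp (- a * (t - t0))"
proof -
  define h where "h s = (f s - G / a) * exp (a * (s - t0))" for s
  have "h t \<le> h t0"
  proof (rule DERIV_nonpos_imp_decreasing_within[OF \<open>t0 \<le> t\<close>])
    fix s assume s: "t0 \<le> s" "s \<le> t"
    have "(f has_real_derivative f' s) (at s within {t0..t})"
      using deriv[OF s(1)] by (rule DERIV_subset) (use assms(3) in auto)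
    then show "(h has_real_derivative (f' s + a * f s - G) * exp (a * (s - t0))) (at s within {t0..t})"
      unfolding h_def by (auto intro!: derivative_eq_intros simp: field_simps \<open>a \<noteq> 0\<close>)
    show "(f' s + a * f s - G) * exp (a * (s - t0)) \<le> 0"
      using le[OF s(1)] by (simp add: mult_nonpos_nonneg)
  qed
  then have "(f t - G / a) * exp (a * (t - t0)) * exp (- a * (t - t0)) \<le> (f t0 - G / a) * exp (- a * (t - t0))"
    by (simp add: h_def)
  then show ?thesis
    by (simp add: mult.assoc flip: exp_add)
qed

lemma linear_differential_inequality_bound:
  fixes f :: "real \<Rightarrow> real"
  assumes "0 < a" "0 \<le> G" "t0 \<le> t" "{t0..} \<subseteq> A"
    and deriv: "\<And>s. t0 \<le> s \<Longrightarrow> (f has_real_derivative f' s) (at s within A)"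
    and le: "\<And>s. t0 \<le> s \<Longrightarrow> f' s \<le> - a * f s + G"
  shows "f t \<le> G / a + \<bar>f t0\<bar>"
proof -
  have "f t \<le> G / a + (f t0 - G / a) * exp (- a * (t - t0))"
    using assms by (intro linear_differential_inequality) auto
  also have "(f t0 - G / a) * exp (- a * (t - t0)) \<le> \<bar>f t0\<bar> * exp (- a * (t - t0))"
    using divide_nonneg_pos[OF assms(2,1)] by (intro mult_right_mono) auto
  also have "\<dots> \<le> \<bar>f t0\<bar>"
    using assms(1,3) by (intro mult_left_le) auto
  finally show ?thesis by simp
qed

lemma exp_decay_tendsto_zero:
  fixes a :: real
  assumes "a > 0"
  shows "((\<lambda>t. C * exp (- a * (t - t0))) \<longlongrightarrow> 0) at_top"
  using assms by real_asymp

lemma eventually_less_of_linear_differential_inequality: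
  fixes f g :: "real \<Rightarrow> real"
  assumes "a > 0" "e > 0"
    and deriv: "\<And>t. 0 \<le> t \<Longrightarrow> (f has_real_derivative f' t) (at t within {0..})"
    and le: "\<And>t. 0 \<le> t \<Longrightarrow> f' t \<le> - a * f t + g t"
    and g: "(g \<longlongrightarrow> 0) at_top"
  shows "\<forall>\<^sub>F t in at_top. f t < e"
proof -
  have "\<forall>\<^sub>F t in at_top. g t < a * e / 2"
    using \<open>a > 0\<close> \<open>e > 0\<close> by (intro order_tendstoD(2)[OF g]) simp
  then obtain T where T: "\<And>t. t \<ge> T \<Longrightarrow> g t < a * e / 2"
    by (auto simp: eventually_at_top_linorder)
  define t0 where "t0 = max 0 T"
  have t0: "t0 \<ge> 0" and g_small: "\<And>t. t \<ge> t0 \<Longrightarrow> g t < a * e / 2"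
    using T by (auto simp: t0_def)
  have bound: "f t \<le> e / 2 + (f t0 - e / 2) * exp (- a * (t - t0))" if "t \<ge> t0" for t
  proof -
    have "f t \<le> a * e / 2 / a + (f t0 - a * e / 2 / a) * exp (- a * (t - t0))"
    proof (rule linear_differential_inequality[OF _ that _ deriv])
      fix s assume "t0 \<le> s"
      then show "f' s \<le> - a * f s + a * e / 2"
        using le[of s] g_small[of s] t0 by simp
    qed (use t0 \<open>a > 0\<close> in auto)
    then show ?thesis using \<open>a > 0\<close> by simp
  qed
  have "\<forall>\<^sub>F t in at_top. (f t0 - e / 2) * exp (- a * (t - t0)) < e / 2"
    using \<open>a > 0\<close> \<open>e > 0\<close> by (intro order_tendstoD(2)[OF exp_decay_tendsto_zero]) simp_all
  with eventually_ge_at_top[of t0] show ?thesis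
  proof eventually_elim
    case (elim t)
    then show ?case using bound[of t] by linarith
  qed
qed

lemma linear_ode_tendsto_zero:
  fixes f g :: "real \<Rightarrow> real"
  assumes "a > 0"
    and deriv: "\<And>t. 0 \<le> t \<Longrightarrow> (f has_real_derivative - a * f t + g t) (at t within {0..})"
    and g: "(g \<longlongrightarrow> 0) at_top"
  shows "(f \<longlongrightarrow> 0) at_top"
proof (rule tendstoI)
  fix e :: real assume "e > 0"
  have "\<forall>\<^sub>F t in at_top. f t < e"
    using eventually_less_of_linear_differential_inequality[OF \<open>a > 0\<close> \<open>e > 0\<close> deriv _ g]
    by simp
  moreover have "\<forall>\<^sub>F t in at_top. - f t < e"
  proof (rule eventually_less_of_linear_differential_inequality[OF \<open>a > 0\<close> \<open>e > 0\<close>])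
    show "((\<lambda>t. - f t) has_real_derivative - (- a * f t + g t)) (at t within {0..})" if "0 \<le> t" for t
      using deriv[OF that] by (rule DERIV_minus)
    show "((\<lambda>t. - g t) \<longlongrightarrow> 0) at_top"
      using tendsto_minus[OF g] by simp
  qed simp
  ultimately show "\<forall>\<^sub>F t in at_top. dist (f t) 0 < e"
    by eventually_elim auto
qed

section \<open>Forward invariance of the nonnegative orthant\<close>

lemma finite_family_stays_positive:
  fixes F :: "(real \<Rightarrow> real) set"
  assumes "finite F"
    and cont: "\<And>f. f \<in> F \<Longrightarrow> continuous_on {0..T} f"
    and init: "\<And>f. f \<in> F \<Longrightarrow> 0 < f 0"
    and upcrossing: "\<And>f t. f \<in> F \<Longrightarrow> 0 < t \<Longrightarrow> t \<le> T \<Longrightarrow> (\<forall>h\<in>F. 0 \<le> h t) \<Longrightarrow> f t = 0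
          \<Longrightarrow> \<exists>D>0. (f has_real_derivative D) (at t)"
    and "f \<in> F" "0 \<le> t" "t \<le> T"
  shows "0 < f t"
proof (rule ccontr)
  assume "\<not> 0 < f t"
  define Z where "Z = (\<Union>h\<in>F. {0..T} \<inter> h -` {..0})"
  have "closed Z"
    unfolding Z_def using \<open>finite F\<close> cont by (intro closed_UN ballI continuous_closed_preimage) auto
  moreover have "t \<in> Z"
    unfolding Z_def using \<open>\<not> 0 < f t\<close> assms(5-7) by (intro UN_I[of f]) auto
  moreover have "bdd_below Z"
    by (rule bdd_belowI[of _ 0]) (auto simp: Z_def)
  ultimately have "Inf Z \<in> Z"
    by (intro closed_contains_Inf) auto
  then obtain f1 where f1: "f1 \<in> F" "f1 (Inf Z) \<le> 0" and t1: "0 \<le> Inf Z" "Inf Z \<le> T"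
    by (auto simp: Z_def)
  have before: "0 < h s" if "h \<in> F" "0 \<le> s" "s < Inf Z" for h s
  proof (rule ccontr)
    assume "\<not> 0 < h s"
    then have "s \<in> Z" unfolding Z_def using that t1 by (intro UN_I[of h]) auto
    then show False using cInf_lower[OF _ \<open>bdd_below Z\<close>] \<open>s < Inf Z\<close> by fastforce
  qed
  have "0 < Inf Z"
    using init[OF f1(1)] f1(2) t1(1) by (cases "Inf Z = 0") auto
  have nonneg: "\<forall>h\<in>F. 0 \<le> h (Inf Z)"
  proof
    fix h assume "h \<in> F"
    have "closure {0..<Inf Z} \<subseteq> {0..T} \<inter> h -` {0..}"
      using before[OF \<open>h \<in> F\<close>] t1 cont[OF \<open>h \<in> F\<close>]
      by (intro closure_minimal continuous_closed_preimage) (auto simp: less_imp_le)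
    then show "0 \<le> h (Inf Z)" using \<open>0 < Inf Z\<close> by (auto simp: subset_eq)
  qed
  with f1 have "f1 (Inf Z) = 0" by (simp add: order_antisym)
  then obtain D where "D > 0" "(f1 has_real_derivative D) (at (Inf Z))"
    using upcrossing[OF f1(1) \<open>0 < Inf Z\<close> t1(2) nonneg] by blast
  then obtain d where "d > 0" and increasing: "\<And>h. 0 < h \<Longrightarrow> h < d \<Longrightarrow> f1 (Inf Z - h) < f1 (Inf Z)"
    using DERIV_pos_inc_left by blast
  define h where "h = min (d / 2) (Inf Z / 2)"
  have "0 < h" "h < d" "h \<le> Inf Z"
    using \<open>d > 0\<close> \<open>0 < Inf Z\<close> by (auto simp: h_def)
  then show False
    using increasing[of h] before[OF f1(1), of "Inf Z - h"] \<open>f1 (Inf Z) = 0\<close> by auto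
qed

lemma finite_family_nonneg:
  fixes F :: "(real \<Rightarrow> real) set" and C :: real
  assumes "finite F"
    and cont: "\<And>f. f \<in> F \<Longrightarrow> continuous_on {0..T} f"
    and init: "\<And>f. f \<in> F \<Longrightarrow> 0 \<le> f 0"
    and quasi_positive: "\<And>f t g. f \<in> F \<Longrightarrow> 0 < t \<Longrightarrow> t \<le> T \<Longrightarrow> 0 < g \<Longrightarrow> (\<forall>h\<in>F. - g \<le> h t)
          \<Longrightarrow> f t = - g \<Longrightarrow> \<exists>D \<ge> - C * g. (f has_real_derivative D) (at t)"
    and "f \<in> F" "0 \<le> t" "t \<le> T"
  shows "0 \<le> f t"
proof -
  define r where "r = \<bar>C\<bar> + 1"
  define shift where "shift e h s = h s + e * exp (r * s)" for e and h :: "real \<Rightarrow> real" and s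
  have shift_pos: "0 < shift e f t" if "e > 0" for e
  proof (rule finite_family_stays_positive[where F = "shift e ` F" and f = "shift e f" and t = t])
    show "finite (shift e ` F)" using \<open>finite F\<close> by simp
    show "continuous_on {0..T} p" if "p \<in> shift e ` F" for p
      using that cont by (auto simp: shift_def intro!: continuous_intros)
    show "0 < p 0" if "p \<in> shift e ` F" for p
      using that init \<open>e > 0\<close> by (force simp: shift_def intro: add_nonneg_pos)
  next
    fix p s assume p: "p \<in> shift e ` F" and s: "0 < s" "s \<le> T"
      and nonneg: "\<forall>q\<in>shift e ` F. 0 \<le> q s" and "p s = 0"
    obtain h where h: "h \<in> F" "p = shift e h" using p by blast
    define g where "g = e * exp (r * s)"
    have "0 < g" using \<open>e > 0\<close> by (simp add: g_def)
    moreover have "\<forall>k\<in>F. - g \<le> k s" and "h s = - g"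
      using nonneg \<open>p s = 0\<close> h by (auto simp: shift_def g_def)
    ultimately obtain D where "D \<ge> - C * g" and D: "(h has_real_derivative D) (at s)"
      using quasi_positive[OF h(1) s] by blast
    have "(p has_real_derivative D + g * r) (at s)"
      unfolding h(2) shift_def g_def by (auto intro!: derivative_eq_intros D)
    moreover have "0 < D + g * r"
    proof -
      have "- C * g + g * r = g * (r - C)" by (simp add: algebra_simps)
      moreover have "0 < g * (r - C)" using \<open>0 < g\<close> by (simp add: r_def)
      ultimately show ?thesis using \<open>D \<ge> - C * g\<close> by linarith
    qed
    ultimately show "\<exists>D>0. (p has_real_derivative D) (at s)" by blast
  qed (use assms(5-7) in auto)
  show ?thesis
  proof (rule ccontr)
    assume "\<not> 0 \<le> f t"
    define e where "e = - f t / (2 * exp (r * t))"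
    have "0 < e" using \<open>\<not> 0 \<le> f t\<close> by (simp add: e_def divide_neg_pos)
    moreover have "shift e f t = f t / 2" by (simp add: shift_def e_def)
    ultimately show False using shift_pos[of e] \<open>\<not> 0 \<le> f t\<close> by auto
  qed
qed

lemma DERIV_at_of_within_Ici:
  "(f has_real_derivative D) (at t within {a..}) \<Longrightarrow> a < t \<Longrightarrow> (f has_real_derivative D) (at t)"
  using at_within_interior[of t "{a..}"] by simp

lemma mult_ge_neg_bound:
  fixes x y g M :: real
  assumes "- g \<le> x" "- g \<le> y" "\<bar>x\<bar> \<le> M" "\<bar>y\<bar> \<le> M" "0 \<le> g"
  shows "- (M * g) \<le> x * y"
proof -
  have "0 \<le> M" using assms(3) by linarith
  consider "0 \<le> x" "0 \<le> y" | "0 \<le> x" "y < 0" | "x < 0" "0 \<le> y" | "x < 0" "y < 0"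
    by linarith
  then show ?thesis
  proof cases
    case 2
    then have "x * - y \<le> M * g" using assms by (intro mult_mono) auto
    then show ?thesis by simp
  next
    case 3
    then have "- x * y \<le> g * M" using assms by (intro mult_mono) auto
    then show ?thesis by (simp add: mult.commute)
  qed (use \<open>0 \<le> M\<close> \<open>0 \<le> g\<close> mult_nonpos_nonpos[of x y] in \<open>auto intro: order_trans[of _ 0]\<close>)
qed

section \<open>The SEIR model with vaccination\<close>

lemma dist_state_le:
  fixes s e i r v s' e' i' r' v' :: real
  shows "dist (s, e, i, r, v) (s', e', i', r', v')
    \<le> \<bar>s - s'\<bar> + \<bar>e - e'\<bar> + \<bar>i - i'\<bar> + \<bar>r - r'\<bar> + \<bar>v - v'\<bar>"
proof -
  have dist_Pair_le: "dist (x, y) (x', y') \<le> dist x x' + dist y y'"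
    for x x' :: real and y y' :: "'a::real_normed_vector"
    using norm_Pair_le[of "x - x'" "y - y'"] by (simp add: dist_norm)
  have "dist (s, e, i, r, v) (s', e', i', r', v')
      \<le> dist s s' + (dist e e' + (dist i i' + (dist r r' + dist v v')))"
    by (intro order_trans[OF dist_Pair_le] add_left_mono) simp_all
  then show ?thesis by (simp add: dist_real_def add.assoc)
qed

lemma abs_le_dist_state:
  fixes s e i r v s' e' i' r' v' :: real
  defines "d \<equiv> dist (s, e, i, r, v) (s', e', i', r', v')"
  shows "\<bar>s - s'\<bar> \<le> d" "\<bar>e - e'\<bar> \<le> d" "\<bar>i - i'\<bar> \<le> d" "\<bar>r - r'\<bar> \<le> d"
proof -
  let ?x = "(s, e, i, r, v)" and ?y = "(s', e', i', r', v')"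
  have "dist (fst ?x) (fst ?y) \<le> d"
    unfolding d_def by (rule dist_fst_le)
  moreover have "dist (fst (snd ?x)) (fst (snd ?y)) \<le> d"
    unfolding d_def by (rule order_trans[OF dist_fst_le dist_snd_le])
  moreover have "dist (fst (snd (snd ?x))) (fst (snd (snd ?y))) \<le> d"
    unfolding d_def by (rule order_trans[OF dist_fst_le order_trans[OF dist_snd_le dist_snd_le]])
  moreover have "dist (fst (snd (snd (snd ?x)))) (fst (snd (snd (snd ?y)))) \<le> d"
    unfolding d_def
    by (rule order_trans[OF dist_fst_le order_trans[OF dist_snd_le order_trans[OF dist_snd_le dist_snd_le]]])
  ultimately show "\<bar>s - s'\<bar> \<le> d" "\<bar>e - e'\<bar> \<le> d" "\<bar>i - i'\<bar> \<le> d" "\<bar>r - r'\<bar> \<le> d"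
    by (simp_all add: dist_real_def)
qed

lemma has_vector_derivative_fst:
  "(f has_vector_derivative (a, b)) F \<Longrightarrow> ((\<lambda>t. fst (f t)) has_vector_derivative a) F"
  by (auto simp: has_vector_derivative_def dest: has_derivative_fst)

lemma has_vector_derivative_snd:
  "(f has_vector_derivative (a, b)) F \<Longrightarrow> ((\<lambda>t. snd (f t)) has_vector_derivative b) F"
  by (auto simp: has_vector_derivative_def dest: has_derivative_snd)

text \<open>\<open>b = \<beta> * (1 - \<rho>) / N\<close> is the effective transmission rate and \<open>q = p / N\<close> the
  per-capita vaccination rate.\<close>

locale seirv_params =
  fixes \<mu> N b q \<sigma> \<gamma> :: real
  assumes mu_pos: "0 < \<mu>" and N_pos: "0 < N" and b_pos: "0 < b"
    and sigma_pos: "0 < \<sigma>" and gamma_pos: "0 < \<gamma>" and q_nonneg: "0 \<le> q"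
begin

definition S_dfe :: real where "S_dfe = \<mu> * N / (q + \<mu>)"

definition P_dfe :: state where "P_dfe = (S_dfe, 0, 0, 0, N - S_dfe)"

lemma S_dfe_pos: "0 < S_dfe"
  using mu_pos N_pos q_nonneg by (simp add: S_dfe_def)

lemma S_dfe_balance: "(q + \<mu>) * S_dfe = \<mu> * N"
  using mu_pos q_nonneg by (simp add: S_dfe_def)

lemma DFE_eq_P_dfe: "DFE \<mu> N (N * q) = P_dfe"
proof -
  have "0 < q + \<mu>" using mu_pos q_nonneg by simp
  have denominator: "N * q + \<mu> * N = N * (q + \<mu>)" by (simp add: algebra_simps)
  have "\<mu> * N\<^sup>2 / (N * (q + \<mu>)) = \<mu> * N / (q + \<mu>)" "N * q * N / (N * (q + \<mu>)) = N * q / (q + \<mu>)"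
    using N_pos by (simp_all add: power2_eq_square mult.assoc mult.left_commute[of N])
  moreover have "N * q / (q + \<mu>) = N - \<mu> * N / (q + \<mu>)"
    using \<open>0 < q + \<mu>\<close> by (simp add: field_simps)
  ultimately show ?thesis by (simp add: DFE_def P_dfe_def S_dfe_def denominator)
qed

end

locale seirv_trajectory = seirv_params +
  fixes S E I R V :: "real \<Rightarrow> real"
  assumes S_deriv: "\<And>t. 0 \<le> t \<Longrightarrow>
      (S has_real_derivative \<mu> * N - b * S t * I t - q * S t - \<mu> * S t) (at t within {0..})"
    and E_deriv: "\<And>t. 0 \<le> t \<Longrightarrow>
      (E has_real_derivative b * S t * I t - (\<sigma> + \<mu>) * E t) (at t within {0..})"
    and I_deriv: "\<And>t. 0 \<le> t \<Longrightarrow>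
      (I has_real_derivative \<sigma> * E t - (\<gamma> + \<mu>) * I t) (at t within {0..})"
    and R_deriv: "\<And>t. 0 \<le> t \<Longrightarrow>
      (R has_real_derivative \<gamma> * I t - \<mu> * R t) (at t within {0..})"
    and V_deriv: "\<And>t. 0 \<le> t \<Longrightarrow>
      (V has_real_derivative q * S t - \<mu> * V t) (at t within {0..})"
    and initial_nonneg: "0 \<le> S 0" "0 \<le> E 0" "0 \<le> I 0" "0 \<le> R 0" "0 \<le> V 0"
    and initial_total: "S 0 + E 0 + I 0 + R 0 + V 0 = N"
begin

lemma continuous_on_compartments:
  assumes "f \<in> {S, E, I, R, V}"
  shows "continuous_on {0..} f"
proof -
  have cont: "continuous_on {0..} h"
    if "\<And>t. 0 \<le> t \<Longrightarrow> (h has_real_derivative h' t) (at t within {0..})" for h h'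
    using that by (intro DERIV_continuous_on) simp
  show ?thesis
    using assms cont[OF S_deriv] cont[OF E_deriv] cont[OF I_deriv] cont[OF R_deriv] cont[OF V_deriv]
    by blast
qed

lemma quasi_positive:
  assumes "f \<in> {S, E, I, R, V}" "0 < t" "0 < g" "\<forall>h\<in>{S, E, I, R, V}. - g \<le> h t" "f t = - g"
    and "\<bar>S t\<bar> \<le> M" "\<bar>I t\<bar> \<le> M"
  shows "\<exists>D \<ge> - (b * M + \<sigma> + \<gamma> + q) * g. (f has_real_derivative D) (at t)"
proof -
  have lower: "- g \<le> S t" "- g \<le> E t" "- g \<le> I t" "- g \<le> R t" "- g \<le> V t"
    using assms(4) by auto
  have "0 \<le> M" using assms(6) by linarith
  have SI: "b * - (M * g) \<le> b * (S t * I t)"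
    using mult_ge_neg_bound[OF lower(1,3) assms(6,7)] b_pos \<open>0 < g\<close> by (intro mult_left_mono) simp_all
  have gI: "b * g * (- M) \<le> b * g * I t"
    using assms(7) b_pos \<open>0 < g\<close> by (intro mult_left_mono) auto
  have pos: "0 \<le> b * M * g" "0 < \<mu> * N" "0 \<le> q * g" "0 < \<mu> * g" "0 < \<sigma> * g" "0 < \<gamma> * g"
    using \<open>0 \<le> M\<close> \<open>0 < g\<close> b_pos mu_pos N_pos q_nonneg sigma_pos gamma_pos by simp_all
  have lin: "\<sigma> * (- g) \<le> \<sigma> * E t" "\<gamma> * (- g) \<le> \<gamma> * I t" "q * (- g) \<le> q * S t"
    using mult_left_mono[OF lower(2), of \<sigma>] mult_left_mono[OF lower(3), of \<gamma>]
      mult_left_mono[OF lower(1), of q] sigma_pos gamma_pos q_nonneg by simp_all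
  let ?C = "b * M + \<sigma> + \<gamma> + q"
  from assms(1) consider "f = S" | "f = E" | "f = I" | "f = R" | "f = V" by blast
  then show ?thesis
  proof cases
    case 1
    have "- ?C * g \<le> \<mu> * N - b * S t * I t - q * S t - \<mu> * S t"
      using assms(5) 1 gI pos by (simp add: algebra_simps)
    then show ?thesis using 1 DERIV_at_of_within_Ici[OF S_deriv] assms(2) by auto
  next
    case 2
    have "- ?C * g \<le> b * S t * I t - (\<sigma> + \<mu>) * E t"
      using assms(5) 2 SI pos by (simp add: algebra_simps)
    then show ?thesis using 2 DERIV_at_of_within_Ici[OF E_deriv] assms(2) by auto
  next
    case 3
    have "- ?C * g \<le> \<sigma> * E t - (\<gamma> + \<mu>) * I t"
      using assms(5) 3 lin pos by (simp add: algebra_simps)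
    then show ?thesis using 3 DERIV_at_of_within_Ici[OF I_deriv] assms(2) by auto
  next
    case 4
    have "- ?C * g \<le> \<gamma> * I t - \<mu> * R t"
      using assms(5) 4 lin pos by (simp add: algebra_simps)
    then show ?thesis using 4 DERIV_at_of_within_Ici[OF R_deriv] assms(2) by auto
  next
    case 5
    have "- ?C * g \<le> q * S t - \<mu> * V t"
      using assms(5) 5 lin pos by (simp add: algebra_simps)
    then show ?thesis using 5 DERIV_at_of_within_Ici[OF V_deriv] assms(2) by auto
  qed
qed

lemma compartments_nonneg:
  assumes "0 \<le> t"
  shows "0 \<le> S t" "0 \<le> E t" "0 \<le> I t" "0 \<le> R t" "0 \<le> V t"
proof -
  have "compact ((\<lambda>s. \<bar>S s\<bar> + \<bar>I s\<bar>) ` {0..t})"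
    using continuous_on_compartments[of S] continuous_on_compartments[of I]
    by (intro compact_continuous_image continuous_intros) (auto intro: continuous_on_subset)
  then obtain M where M: "\<And>s. s \<in> {0..t} \<Longrightarrow> \<bar>S s\<bar> + \<bar>I s\<bar> \<le> M"
    by (fastforce dest: compact_imp_bounded simp: bounded_real)
  have "0 \<le> f t" if "f \<in> {S, E, I, R, V}" for f
  proof (rule finite_family_nonneg[where F = "{S, E, I, R, V}" and C = "b * M + \<sigma> + \<gamma> + q" and T = t and f = f and t = t])
    show "continuous_on {0..t} h" if "h \<in> {S, E, I, R, V}" for h
      using continuous_on_compartments[OF that] by (rule continuous_on_subset) auto
    show "\<exists>D \<ge> - (b * M + \<sigma> + \<gamma> + q) * g. (h has_real_derivative D) (at s)"
      if "h \<in> {S, E, I, R, V}" "0 < s" "s \<le> t" "0 < g" "\<forall>k\<in>{S, E, I, R, V}. - g \<le> k s" "h s = - g"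
      for h s g
      using M[of s] that by (intro quasi_positive) auto
  qed (use initial_nonneg that assms in auto)
  then show "0 \<le> S t" "0 \<le> E t" "0 \<le> I t" "0 \<le> R t" "0 \<le> V t" by simp_all
qed

lemma total_population:
  assumes "0 \<le> t"
  shows "S t + E t + I t + R t + V t = N"
proof -
  define F where "F s = S s + E s + I s + R s + V s - N" for s
  have deriv: "(F has_real_derivative - \<mu> * F s) (at s within {0..})" if "0 \<le> s" for s
  proof -
    have "(F has_real_derivative (\<mu> * N - b * S s * I s - q * S s - \<mu> * S s) + (b * S s * I s - (\<sigma> + \<mu>) * E s)
        + (\<sigma> * E s - (\<gamma> + \<mu>) * I s) + (\<gamma> * I s - \<mu> * R s) + (q * S s - \<mu> * V s) - 0) (at s within {0..})"
      unfolding F_def[abs_def] using that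
      by (intro DERIV_diff DERIV_add S_deriv E_deriv I_deriv R_deriv V_deriv DERIV_const)
    then show ?thesis by (rule DERIV_cong) (simp add: F_def algebra_simps)
  qed
  have "F 0 = 0" using initial_total by (simp add: F_def)
  have "F t \<le> 0"
    using linear_differential_inequality_bound[of \<mu> 0 0 t "{0..}" F, OF _ _ _ _ deriv]
      \<open>F 0 = 0\<close> assms mu_pos by simp
  moreover have "- F t \<le> 0"
    using linear_differential_inequality_bound[of \<mu> 0 0 t "{0..}" "\<lambda>s. - F s", OF _ _ _ _ DERIV_minus[OF deriv]]
      \<open>F 0 = 0\<close> assms mu_pos by simp
  ultimately show ?thesis by (simp add: F_def)
qed

lemma S_le_N: "0 \<le> t \<Longrightarrow> S t \<le> N"
  using total_population[of t] compartments_nonneg[of t] by linarith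

lemma S_deviation_deriv:
  assumes "0 \<le> t"
  shows "((\<lambda>s. S s - S_dfe) has_real_derivative - (q + \<mu>) * (S t - S_dfe) - b * S t * I t) (at t within {0..})"
  using DERIV_diff[OF S_deriv[OF assms] DERIV_const[of S_dfe]]
  by (rule DERIV_cong) (use S_dfe_balance in \<open>simp add: algebra_simps\<close>)

lemma S_excess_decay:
  assumes "0 \<le> t"
  shows "S t - S_dfe \<le> \<bar>S 0 - S_dfe\<bar> * exp (- (q + \<mu>) * t)"
proof -
  have "S t - S_dfe \<le> 0 / (q + \<mu>) + (S 0 - S_dfe - 0 / (q + \<mu>)) * exp (- (q + \<mu>) * (t - 0))"
    (is "_ \<le> ?bound")
  proof (rule linear_differential_inequality[OF _ assms _ S_deviation_deriv])
    show "- (q + \<mu>) * (S s - S_dfe) - b * S s * I s \<le> - (q + \<mu>) * (S s - S_dfe) + 0" if "0 \<le> s" for s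
      using compartments_nonneg[OF that] b_pos by simp
  qed (use mu_pos q_nonneg in auto)
  also have "?bound \<le> \<bar>S 0 - S_dfe\<bar> * exp (- (q + \<mu>) * t)"
    by (simp add: mult_right_mono)
  finally show ?thesis .
qed

lemma S_excess_le:
  assumes "0 \<le> t"
  shows "S t - S_dfe \<le> \<bar>S 0 - S_dfe\<bar>"
proof -
  have "- (q + \<mu>) * t \<le> 0"
    using assms mu_pos q_nonneg by (intro mult_nonpos_nonneg) auto
  then have "exp (- (q + \<mu>) * t) \<le> 1" by simp
  then show ?thesis
    using S_excess_decay[OF assms] mult_left_le[of "exp (- (q + \<mu>) * t)" "\<bar>S 0 - S_dfe\<bar>"] by simp
qed

lemma dist_P_dfe_le:
  assumes "0 \<le> t"
  shows "dist (S t, E t, I t, R t, V t) P_dfe \<le> 2 * (\<bar>S t - S_dfe\<bar> + E t + I t + R t)"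
proof -
  have "V t - (N - S_dfe) = - ((S t - S_dfe) + E t + I t + R t)"
    using total_population[OF assms] by simp
  then have "\<bar>V t - (N - S_dfe)\<bar> \<le> \<bar>S t - S_dfe\<bar> + E t + I t + R t"
    using compartments_nonneg[OF assms] abs_ge_self[of "S t - S_dfe"] abs_ge_minus_self[of "S t - S_dfe"]
    unfolding abs_le_iff by linarith
  then show ?thesis
    using dist_state_le[of "S t" "E t" "I t" "R t" "V t" S_dfe 0 0 0 "N - S_dfe"] compartments_nonneg[OF assms]
    by (simp add: P_dfe_def)
qed

lemma deviation_le_dist:
  assumes "0 \<le> t"
  shows "\<bar>S t - S_dfe\<bar> \<le> dist (S t, E t, I t, R t, V t) P_dfe"
    and "\<bar>S t - S_dfe\<bar> + E t + I t + R t \<le> 4 * dist (S t, E t, I t, R t, V t) P_dfe"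
  using abs_le_dist_state[where s = "S t" and e = "E t" and i = "I t" and r = "R t" and v = "V t"
      and s' = S_dfe and e' = 0 and i' = 0 and r' = 0 and v' = "N - S_dfe"]
    compartments_nonneg[OF assms]
  by (simp_all add: P_dfe_def)

end

section \<open>Global stability below the threshold\<close>

locale seirv_subthreshold = seirv_params +
  assumes subthreshold: "\<sigma> * b * S_dfe < (\<sigma> + \<mu>) * (\<gamma> + \<mu>)"
begin

text \<open>Any weight strictly between \<open>b * S_dfe / (\<gamma> + \<mu>)\<close> and \<open>(\<sigma> + \<mu>) / \<sigma>\<close> makes
  \<open>W = E + I_weight * I\<close> a Lyapunov function near \<open>S_dfe\<close>; the interval is nonempty
  exactly when \<open>\<R>\<^sub>0 < 1\<close>.\<close>

definition I_weight :: real
  where "I_weight = (b * S_dfe / (\<gamma> + \<mu>) + (\<sigma> + \<mu>) / \<sigma>) / 2"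

definition S_margin :: real
  where "S_margin = (I_weight * (\<gamma> + \<mu>) - b * S_dfe) / (2 * b)"

definition W_rate :: real
  where "W_rate = min (\<sigma> + \<mu> - I_weight * \<sigma>) (b * S_margin) / (1 + I_weight)"

definition stability_gain :: real
  where "stability_gain =
    1 + (1 + I_weight) * (1 + 1 / I_weight + b * N / (I_weight * (q + \<mu>)) + \<gamma> / (I_weight * \<mu>))"

lemma I_weight_bounds: "b * S_dfe < I_weight * (\<gamma> + \<mu>)" "I_weight * \<sigma> < \<sigma> + \<mu>"
proof -
  have lt: "b * S_dfe / (\<gamma> + \<mu>) < (\<sigma> + \<mu>) / \<sigma>"
    using subthreshold mu_pos sigma_pos gamma_pos by (simp add: field_simps)
  have "b * S_dfe / (\<gamma> + \<mu>) < I_weight" "I_weight < (\<sigma> + \<mu>) / \<sigma>"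
    using less_half_sum[OF lt] gt_half_sum[OF lt] by (simp_all only: I_weight_def one_add_one)
  then show "b * S_dfe < I_weight * (\<gamma> + \<mu>)" "I_weight * \<sigma> < \<sigma> + \<mu>"
    using mu_pos sigma_pos gamma_pos by (simp_all add: field_simps)
qed

lemma I_weight_pos: "0 < I_weight"
proof -
  have "0 < I_weight * (\<gamma> + \<mu>)"
    using I_weight_bounds(1) b_pos S_dfe_pos by (smt (verit) mult_pos_pos)
  then show ?thesis using mu_pos gamma_pos by (simp add: zero_less_mult_iff)
qed

lemma S_margin_pos: "0 < S_margin"
  using I_weight_bounds(1) b_pos by (simp add: S_margin_def)

lemma infection_pressure_margin: "b * (S_dfe + S_margin) - I_weight * (\<gamma> + \<mu>) = - (b * S_margin)"
  using b_pos by (simp add: S_margin_def field_simps)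

lemma W_rate_pos: "0 < W_rate"
  using I_weight_bounds(2) I_weight_pos S_margin_pos b_pos by (simp add: W_rate_def)

lemma stability_gain_pos: "0 < stability_gain"
  using I_weight_pos mu_pos q_nonneg b_pos N_pos gamma_pos
  by (simp add: stability_gain_def add_pos_nonneg)

end

locale seirv_subthreshold_trajectory = seirv_subthreshold + seirv_trajectory
begin

definition W :: "real \<Rightarrow> real" where "W t = E t + I_weight * I t"

lemma W_nonneg: "0 \<le> t \<Longrightarrow> 0 \<le> W t"
  using compartments_nonneg I_weight_pos by (simp add: W_def)

lemma E_le_W: "0 \<le> t \<Longrightarrow> E t \<le> W t"
  and I_le_W: "0 \<le> t \<Longrightarrow> I t \<le> W t / I_weight"
  using compartments_nonneg I_weight_pos by (simp_all add: W_def field_simps)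

lemma W_deriv:
  assumes "0 \<le> t"
  shows "(W has_real_derivative
      b * S t * I t - (\<sigma> + \<mu>) * E t + I_weight * (\<sigma> * E t - (\<gamma> + \<mu>) * I t)) (at t within {0..})"
  unfolding W_def[abs_def] using assms by (intro DERIV_add DERIV_cmult E_deriv I_deriv)

lemma W_deriv_le:
  assumes "0 \<le> t" "S t \<le> S_dfe + S_margin"
  shows "b * S t * I t - (\<sigma> + \<mu>) * E t + I_weight * (\<sigma> * E t - (\<gamma> + \<mu>) * I t) \<le> - W_rate * W t"
proof -
  define \<eta> where "\<eta> = min (\<sigma> + \<mu> - I_weight * \<sigma>) (b * S_margin)"
  have nonneg: "0 \<le> E t" "0 \<le> I t" using compartments_nonneg assms(1) by simp_all
  have "b * S t - I_weight * (\<gamma> + \<mu>) \<le> - (b * S_margin)"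
    using mult_left_mono[OF assms(2), of b] b_pos infection_pressure_margin by (simp add: algebra_simps)
  then have "I t * (b * S t - I_weight * (\<gamma> + \<mu>)) \<le> I t * - \<eta>"
    using nonneg by (intro mult_left_mono) (auto simp: \<eta>_def)
  moreover have "- (\<sigma> + \<mu> - I_weight * \<sigma>) * E t \<le> - \<eta> * E t"
    using nonneg by (intro mult_right_mono) (auto simp: \<eta>_def)
  moreover have "W_rate * W t \<le> \<eta> * (E t + I t)"
  proof -
    have "W t \<le> (1 + I_weight) * (E t + I t)"
      using nonneg I_weight_pos by (simp add: W_def algebra_simps)
    moreover have "0 \<le> \<eta>" using I_weight_bounds(2) S_margin_pos b_pos by (simp add: \<eta>_def)
    ultimately show ?thesis
      using I_weight_pos mult_left_mono[of "W t" "(1 + I_weight) * (E t + I t)" "\<eta> / (1 + I_weight)"]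
      by (simp add: W_rate_def \<eta>_def)
  qed
  ultimately show ?thesis by (simp add: algebra_simps)
qed

lemma W_decay:
  assumes "0 \<le> t0" "t0 \<le> t" and S_le: "\<And>s. t0 \<le> s \<Longrightarrow> S s \<le> S_dfe + S_margin"
  shows "W t \<le> W t0 * exp (- W_rate * (t - t0))"
proof -
  have "W t \<le> 0 / W_rate + (W t0 - 0 / W_rate) * exp (- W_rate * (t - t0))"
  proof (rule linear_differential_inequality[OF _ assms(2)])
    fix s assume "t0 \<le> s"
    then show "(W has_real_derivative
        b * S s * I s - (\<sigma> + \<mu>) * E s + I_weight * (\<sigma> * E s - (\<gamma> + \<mu>) * I s)) (at s within {0..})"
      and "b * S s * I s - (\<sigma> + \<mu>) * E s + I_weight * (\<sigma> * E s - (\<gamma> + \<mu>) * I s) \<le> - W_rate * W s + 0"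
      using W_deriv W_deriv_le[OF _ S_le] assms(1) by simp_all
  qed (use W_rate_pos assms(1) in auto)
  then show ?thesis by simp
qed

lemma eventually_S_le: "\<forall>\<^sub>F t in at_top. S t \<le> S_dfe + S_margin"
proof -
  have "\<forall>\<^sub>F t in at_top. \<bar>S 0 - S_dfe\<bar> * exp (- (q + \<mu>) * (t - 0)) < S_margin"
    using mu_pos q_nonneg S_margin_pos by (intro order_tendstoD(2)[OF exp_decay_tendsto_zero]) simp_all
  with eventually_ge_at_top[of 0] show ?thesis
  proof eventually_elim
    case (elim t)
    then show ?case using S_excess_decay[of t] by simp
  qed
qed

lemma W_tendsto_zero: "(W \<longlongrightarrow> 0) at_top"
proof -
  obtain T where T: "\<And>t. T \<le> t \<Longrightarrow> S t \<le> S_dfe + S_margin"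
    using eventually_S_le by (auto simp: eventually_at_top_linorder)
  define t0 where "t0 = max 0 T"
  have "\<forall>\<^sub>F t in at_top. 0 \<le> W t"
    using eventually_ge_at_top[of 0] by (rule eventually_mono) (rule W_nonneg)
  moreover have "\<forall>\<^sub>F t in at_top. W t \<le> W t0 * exp (- W_rate * (t - t0))"
    using eventually_ge_at_top[of t0]
    by eventually_elim (rule W_decay, use T in \<open>auto simp: t0_def\<close>)
  ultimately show ?thesis
    by (rule tendsto_sandwich[OF _ _ tendsto_const exp_decay_tendsto_zero[OF W_rate_pos]])
qed

lemma E_tendsto_zero: "(E \<longlongrightarrow> 0) at_top"
proof (rule tendsto_sandwich[OF _ _ tendsto_const W_tendsto_zero])
  show "\<forall>\<^sub>F t in at_top. 0 \<le> E t"
    using eventually_ge_at_top[of 0] by (rule eventually_mono) (rule compartments_nonneg(2))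
  show "\<forall>\<^sub>F t in at_top. E t \<le> W t"
    using eventually_ge_at_top[of 0] by (rule eventually_mono) (rule E_le_W)
qed

lemma I_tendsto_zero: "(I \<longlongrightarrow> 0) at_top"
proof (rule tendsto_sandwich[OF _ _ tendsto_const tendsto_divide_zero[OF W_tendsto_zero]])
  show "\<forall>\<^sub>F t in at_top. 0 \<le> I t"
    using eventually_ge_at_top[of 0] by (rule eventually_mono) (rule compartments_nonneg(3))
  show "\<forall>\<^sub>F t in at_top. I t \<le> W t / I_weight"
    using eventually_ge_at_top[of 0] by (rule eventually_mono) (rule I_le_W)
qed

lemma S_tendsto: "(S \<longlongrightarrow> S_dfe) at_top"
proof -
  have bounds: "- (b * N) * I t \<le> - b * S t * I t" "- b * S t * I t \<le> 0" if "0 \<le> t" for t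
    using mult_right_mono[OF S_le_N[OF that], of "b * I t"] compartments_nonneg[OF that] b_pos
    by (simp_all add: algebra_simps)
  have infection_tendsto: "((\<lambda>t. - b * S t * I t) \<longlongrightarrow> 0) at_top"
  proof (rule tendsto_sandwich[OF _ _ tendsto_mult_right_zero[OF I_tendsto_zero] tendsto_const])
    show "\<forall>\<^sub>F t in at_top. - (b * N) * I t \<le> - b * S t * I t"
      using eventually_ge_at_top[of 0] by (rule eventually_mono) (rule bounds(1))
    show "\<forall>\<^sub>F t in at_top. - b * S t * I t \<le> 0"
      using eventually_ge_at_top[of 0] by (rule eventually_mono) (rule bounds(2))
  qed
  have deriv: "((\<lambda>s. S s - S_dfe) has_real_derivative - (q + \<mu>) * (S t - S_dfe) + - b * S t * I t)
      (at t within {0..})" if "0 \<le> t" for t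
    using S_deviation_deriv[OF that] by (simp only: diff_conv_add_uminus mult_minus_left)
  have "0 < q + \<mu>" using mu_pos q_nonneg by simp
  from linear_ode_tendsto_zero[OF this deriv infection_tendsto] show ?thesis
    by (rule LIM_zero_cancel)
qed

lemma R_tendsto_zero: "(R \<longlongrightarrow> 0) at_top"
proof (rule linear_ode_tendsto_zero[OF mu_pos _ tendsto_mult_right_zero[OF I_tendsto_zero]])
  show "(R has_real_derivative - \<mu> * R t + \<gamma> * I t) (at t within {0..})" if "0 \<le> t" for t
    using R_deriv[OF that] by simp
qed

lemma V_tendsto: "(V \<longlongrightarrow> N - S_dfe) at_top"
proof -
  have "((\<lambda>t. N - S t - E t - I t - R t) \<longlongrightarrow> N - S_dfe - 0 - 0 - 0) at_top"
    by (intro tendsto_intros S_tendsto E_tendsto_zero I_tendsto_zero R_tendsto_zero)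
  moreover have "\<forall>\<^sub>F t in at_top. N - S t - E t - I t - R t = V t"
    using eventually_ge_at_top[of 0]
    by eventually_elim (simp add: total_population[symmetric] algebra_simps)
  ultimately show ?thesis by (simp add: tendsto_cong)
qed

lemma W_le_initial:
  assumes "\<bar>S 0 - S_dfe\<bar> < S_margin" "0 \<le> t"
  shows "W t \<le> W 0"
proof -
  have "W t \<le> W 0 * exp (- W_rate * (t - 0))"
    using S_excess_le assms by (intro W_decay) fastforce+
  also have "\<dots> \<le> W 0"
    using W_nonneg[of 0] W_rate_pos assms(2) by (intro mult_left_le) auto
  finally show ?thesis .
qed

lemma deviation_bound:
  assumes "\<bar>S 0 - S_dfe\<bar> < S_margin" "0 \<le> t"
  shows "\<bar>S t - S_dfe\<bar> + E t + I t + R t \<le> stability_gain * (\<bar>S 0 - S_dfe\<bar> + E 0 + I 0 + R 0)"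
proof -
  define c where "c = I_weight"
  define W0 where "W0 = W 0"
  have "0 < c" using I_weight_pos by (simp add: c_def)
  have "0 \<le> W0" using W_nonneg[of 0] by (simp add: W0_def)
  have I_bound: "I s \<le> W0 / c" if "0 \<le> s" for s
    using I_le_W[OF that] W_le_initial[OF assms(1) that] \<open>0 < c\<close>
    by (simp add: c_def W0_def divide_right_mono order_trans)
  have R_bound: "R t \<le> \<gamma> * (W0 / c) / \<mu> + \<bar>R 0\<bar>"
  proof (rule linear_differential_inequality_bound[OF mu_pos _ assms(2) _ R_deriv])
    show "\<gamma> * I s - \<mu> * R s \<le> - \<mu> * R s + \<gamma> * (W0 / c)" if "0 \<le> s" for s
      using mult_left_mono[OF I_bound[OF that], of \<gamma>] gamma_pos by simp
  qed (use gamma_pos \<open>0 \<le> W0\<close> \<open>0 < c\<close> in auto)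
  have S_lower: "- (S t - S_dfe) \<le> b * N * (W0 / c) / (q + \<mu>) + \<bar>- (S 0 - S_dfe)\<bar>"
  proof (rule linear_differential_inequality_bound[OF _ _ assms(2)])
    fix s :: real assume "0 \<le> s"
    show "((\<lambda>s. - (S s - S_dfe)) has_real_derivative - (- (q + \<mu>) * (S s - S_dfe) - b * S s * I s))
        (at s within {0..})"
      using S_deviation_deriv[OF \<open>0 \<le> s\<close>] by (rule DERIV_minus)
    have "S s * I s \<le> N * (W0 / c)"
      using S_le_N[OF \<open>0 \<le> s\<close>] I_bound[OF \<open>0 \<le> s\<close>] compartments_nonneg[OF \<open>0 \<le> s\<close>] N_pos
      by (intro mult_mono) auto
    then show "- (- (q + \<mu>) * (S s - S_dfe) - b * S s * I s) \<le> - (q + \<mu>) * - (S s - S_dfe) + b * N * (W0 / c)"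
      using mult_left_mono[of "S s * I s" "N * (W0 / c)" b] b_pos by (simp add: algebra_simps)
  qed (use mu_pos q_nonneg b_pos N_pos \<open>0 \<le> W0\<close> \<open>0 < c\<close> in auto)
  define X where "X = 1 + 1 / c + b * N / (c * (q + \<mu>)) + \<gamma> / (c * \<mu>)"
  have "0 \<le> X" using \<open>0 < c\<close> b_pos N_pos mu_pos q_nonneg gamma_pos by (simp add: X_def)
  have "\<bar>S t - S_dfe\<bar> + E t + I t + R t \<le> \<bar>S 0 - S_dfe\<bar> + R 0 + W0 * X"
  proof -
    have "W0 * X = W0 + W0 / c + b * N * (W0 / c) / (q + \<mu>) + \<gamma> * (W0 / c) / \<mu>"
      using \<open>0 < c\<close> mu_pos q_nonneg by (simp add: X_def field_simps)
    moreover have "E t \<le> W0"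
      using E_le_W[OF assms(2)] W_le_initial[OF assms] by (simp add: W0_def)
    moreover have "\<bar>S t - S_dfe\<bar> \<le> \<bar>S 0 - S_dfe\<bar> + b * N * (W0 / c) / (q + \<mu>)"
    proof -
      have "0 \<le> b * N * (W0 / c) / (q + \<mu>)"
        using b_pos N_pos \<open>0 \<le> W0\<close> \<open>0 < c\<close> mu_pos q_nonneg by simp
      then show ?thesis
        using S_excess_le[OF assms(2)] S_lower by (simp add: abs_le_iff abs_minus_commute)
    qed
    ultimately show ?thesis
      using R_bound I_bound[OF assms(2)] initial_nonneg(4) by simp
  qed
  also have "\<dots> \<le> \<bar>S 0 - S_dfe\<bar> + R 0 + (1 + c) * (E 0 + I 0) * X"
    using initial_nonneg \<open>0 \<le> X\<close> \<open>0 < c\<close> by (intro add_left_mono mult_right_mono) (auto simp: W0_def W_def c_def algebra_simps)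
  also have "\<dots> \<le> stability_gain * (\<bar>S 0 - S_dfe\<bar> + E 0 + I 0 + R 0)"
  proof -
    have "stability_gain = 1 + (1 + c) * X"
      by (simp add: stability_gain_def X_def c_def)
    then have "stability_gain * (\<bar>S 0 - S_dfe\<bar> + E 0 + I 0 + R 0)
        = (\<bar>S 0 - S_dfe\<bar> + E 0 + I 0 + R 0) + (1 + c) * (E 0 + I 0) * X
          + (1 + c) * X * (\<bar>S 0 - S_dfe\<bar> + R 0)"
      by (simp add: algebra_simps)
    moreover have "0 \<le> (1 + c) * X * (\<bar>S 0 - S_dfe\<bar> + R 0)"
      using initial_nonneg \<open>0 \<le> X\<close> \<open>0 < c\<close> by simp
    ultimately show ?thesis
      using initial_nonneg by linarith
  qed
  finally show ?thesis .
qed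

end

context seirv_subthreshold
begin

lemma P_dfe_stable:
  assumes "0 < \<epsilon>"
  obtains \<delta> where "0 < \<delta>"
    and "\<And>S E I R V t. seirv_trajectory \<mu> N b q \<sigma> \<gamma> S E I R V
      \<Longrightarrow> dist (S 0, E 0, I 0, R 0, V 0) P_dfe < \<delta> \<Longrightarrow> 0 \<le> t
      \<Longrightarrow> dist (S t, E t, I t, R t, V t) P_dfe < \<epsilon>"
proof
  define \<delta> where "\<delta> = min S_margin (\<epsilon> / (8 * stability_gain))"
  show "0 < \<delta>"
    using S_margin_pos stability_gain_pos assms by (simp add: \<delta>_def)
  fix S E I R V and t :: real
  assume "seirv_trajectory \<mu> N b q \<sigma> \<gamma> S E I R V" and close: "dist (S 0, E 0, I 0, R 0, V 0) P_dfe < \<delta>"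
    and "0 \<le> t"
  interpret seirv_subthreshold_trajectory \<mu> N b q \<sigma> \<gamma> S E I R V
    using \<open>seirv_trajectory \<mu> N b q \<sigma> \<gamma> S E I R V\<close> seirv_subthreshold_axioms
    by (simp add: seirv_subthreshold_trajectory_def)
  define d0 where "d0 = dist (S 0, E 0, I 0, R 0, V 0) P_dfe"
  have "\<bar>S 0 - S_dfe\<bar> < S_margin"
    using deviation_le_dist(1)[of 0] close by (simp add: d0_def \<delta>_def)
  then have "dist (S t, E t, I t, R t, V t) P_dfe \<le> 2 * (stability_gain * (4 * d0))"
    using dist_P_dfe_le[OF \<open>0 \<le> t\<close>] deviation_bound[OF _ \<open>0 \<le> t\<close>] deviation_le_dist(2)[of 0]
      stability_gain_pos
    by (smt (verit, best) d0_def mult_left_mono)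
  also have "\<dots> < 8 * stability_gain * \<delta>"
    using close stability_gain_pos by (simp add: d0_def)
  also have "\<dots> \<le> \<epsilon>"
    using stability_gain_pos by (simp add: \<delta>_def min_def field_simps)
  finally show "dist (S t, E t, I t, R t, V t) P_dfe < \<epsilon>" .
qed

lemma P_dfe_attractive:
  assumes "seirv_trajectory \<mu> N b q \<sigma> \<gamma> S E I R V"
  shows "((\<lambda>t. (S t, E t, I t, R t, V t)) \<longlongrightarrow> P_dfe) at_top"
proof -
  interpret seirv_subthreshold_trajectory \<mu> N b q \<sigma> \<gamma> S E I R V
    using assms seirv_subthreshold_axioms by (simp add: seirv_subthreshold_trajectory_def)
  show ?thesis
    unfolding P_dfe_def
    by (intro tendsto_Pair S_tendsto E_tendsto_zero I_tendsto_zero R_tendsto_zero V_tendsto)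
qed

end

lemma seirv_solution_trajectory:
  assumes sol: "seirv_solution \<mu> \<beta> \<sigma> \<gamma> \<rho> N p x" and init: "x 0 \<in> Sigma_set N"
    and params: "seirv_params \<mu> N (\<beta> * (1 - \<rho>) / N) (p / N) \<sigma> \<gamma>"
  shows "seirv_trajectory \<mu> N (\<beta> * (1 - \<rho>) / N) (p / N) \<sigma> \<gamma>
    (\<lambda>t. fst (x t)) (\<lambda>t. fst (snd (x t))) (\<lambda>t. fst (snd (snd (x t))))
    (\<lambda>t. fst (snd (snd (snd (x t))))) (\<lambda>t. snd (snd (snd (snd (x t)))))"
proof -
  interpret seirv_params \<mu> N "\<beta> * (1 - \<rho>) / N" "p / N" \<sigma> \<gamma> by (fact params)
  have "(x has_vector_derivative seirv_rhs \<mu> \<beta> \<sigma> \<gamma> \<rho> N p (x t)) (at t within {0..})" if "0 \<le> t" for t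
    using sol that by (simp add: seirv_solution_def)
  then have D: "(x has_vector_derivative
      (\<mu> * N - \<beta> / N * fst (x t) * (1 - \<rho>) * fst (snd (snd (x t))) - fst (x t) / N * p - \<mu> * fst (x t),
       \<beta> / N * fst (x t) * (1 - \<rho>) * fst (snd (snd (x t))) - \<sigma> * fst (snd (x t)) - \<mu> * fst (snd (x t)),
       \<sigma> * fst (snd (x t)) - \<gamma> * fst (snd (snd (x t))) - \<mu> * fst (snd (snd (x t))),
       \<gamma> * fst (snd (snd (x t))) - \<mu> * fst (snd (snd (snd (x t)))),
       fst (x t) / N * p - \<mu> * snd (snd (snd (snd (x t)))))) (at t within {0..})" if "0 \<le> t" for t
    using that by (simp add: seirv_rhs_def split_beta)
  note component = has_vector_derivative_fst has_vector_derivative_snd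
  note real_deriv = has_real_derivative_iff_has_vector_derivative
  show ?thesis
  proof unfold_locales
    fix t :: real assume "0 \<le> t"
    note D = D[OF this]
    show "((\<lambda>t. fst (x t)) has_real_derivative \<mu> * N - \<beta> * (1 - \<rho>) / N * fst (x t) * fst (snd (snd (x t)))
        - p / N * fst (x t) - \<mu> * fst (x t)) (at t within {0..})"
      using component(1)[OF D] by (simp add: real_deriv field_simps)
    show "((\<lambda>t. fst (snd (x t))) has_real_derivative \<beta> * (1 - \<rho>) / N * fst (x t) * fst (snd (snd (x t)))
        - (\<sigma> + \<mu>) * fst (snd (x t))) (at t within {0..})"
      using component(1)[OF component(2)[OF D]] by (simp add: real_deriv field_simps)
    show "((\<lambda>t. fst (snd (snd (x t)))) has_real_derivative \<sigma> * fst (snd (x t))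
        - (\<gamma> + \<mu>) * fst (snd (snd (x t)))) (at t within {0..})"
      using component(1)[OF component(2)[OF component(2)[OF D]]] by (simp add: real_deriv field_simps)
    show "((\<lambda>t. fst (snd (snd (snd (x t))))) has_real_derivative \<gamma> * fst (snd (snd (x t)))
        - \<mu> * fst (snd (snd (snd (x t))))) (at t within {0..})"
      using component(1)[OF component(2)[OF component(2)[OF component(2)[OF D]]]]
      by (simp add: real_deriv field_simps)
    show "((\<lambda>t. snd (snd (snd (snd (x t))))) has_real_derivative p / N * fst (x t)
        - \<mu> * snd (snd (snd (snd (x t))))) (at t within {0..})"
      using component(2)[OF component(2)[OF component(2)[OF component(2)[OF D]]]]
      by (simp add: real_deriv field_simps)
  qed (use init in \<open>auto simp: Sigma_set_def split_beta\<close>)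
qed

lemma R0_less_1_iff:
  assumes "0 < \<mu>" "0 < N" "0 < \<sigma>" "0 < \<gamma>" "0 \<le> p"
  shows "R0 \<mu> \<beta> \<sigma> \<gamma> \<rho> N p < 1
    \<longleftrightarrow> \<sigma> * (\<beta> * (1 - \<rho>) / N) * (\<mu> * N / (p / N + \<mu>)) < (\<sigma> + \<mu>) * (\<gamma> + \<mu>)"
proof -
  have "0 < p + \<mu> * N" using assms by (simp add: add_nonneg_pos)
  have "\<sigma> * (\<beta> * (1 - \<rho>) / N) * (\<mu> * N / (p / N + \<mu>)) = \<mu> * N * \<sigma> * \<beta> * (1 - \<rho>) / (p + \<mu> * N)"
  proof -
    have "\<mu> * N / (p / N + \<mu>) = \<mu> * N * N / (p + \<mu> * N)"
      using assms by (simp add: field_simps)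
    moreover have "\<sigma> * (\<beta> * (1 - \<rho>) / N) * (\<mu> * N * N / D) = \<mu> * N * \<sigma> * \<beta> * (1 - \<rho>) / D"
      if "D \<noteq> 0" for D
      using assms that by (simp add: field_simps)
    ultimately show ?thesis using \<open>0 < p + \<mu> * N\<close> by simp
  qed
  moreover have "0 < (\<sigma> + \<mu>) * (\<gamma> + \<mu>) * (p + \<mu> * N)"
    using assms \<open>0 < p + \<mu> * N\<close> by simp
  ultimately show ?thesis
    using \<open>0 < p + \<mu> * N\<close>
    by (simp add: R0_def divide_less_eq_1_pos pos_divide_less_eq mult.assoc)
qed

lemma seirv_subthreshold_if_R0_less_1:
  assumes "0 < \<mu>" "0 < N" "0 < \<beta>" "0 < \<sigma>" "0 < \<gamma>" "\<rho> < 1" "0 \<le> p"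
    and "R0 \<mu> \<beta> \<sigma> \<gamma> \<rho> N p < 1"
  shows "seirv_subthreshold \<mu> N (\<beta> * (1 - \<rho>) / N) (p / N) \<sigma> \<gamma>"
proof -
  interpret seirv_params \<mu> N "\<beta> * (1 - \<rho>) / N" "p / N" \<sigma> \<gamma>
    using assms by unfold_locales simp_all
  show ?thesis
  proof unfold_locales
    show "\<sigma> * (\<beta> * (1 - \<rho>) / N) * S_dfe < (\<sigma> + \<mu>) * (\<gamma> + \<mu>)"
      unfolding S_dfe_def using R0_less_1_iff[OF assms(1,2,4,5,7)] assms(8) by (rule iffD1)
  qed
qed

theorem mainTheorem8:
  fixes \<mu> \<beta> \<sigma> \<gamma> \<rho> N \<Delta>1 \<Delta>2 \<pi>1 \<pi>2 :: real
  defines "p \<equiv> vacc_p \<Delta>1 \<Delta>2 \<pi>1 \<pi>2"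
  assumes "\<mu> > 0" "N > 0" "\<beta> > 0" "\<sigma> > 0" "\<gamma> > 0" "0 < \<rho>" "\<rho> < 1"
      and "\<Delta>1 \<ge> 0" "\<Delta>2 \<ge> 0" "p \<ge> 0"
      and "R0 \<mu> \<beta> \<sigma> \<gamma> \<rho> N p < 1"
  shows "(\<forall>\<epsilon>>0. \<exists>\<delta>>0. \<forall>x. seirv_solution \<mu> \<beta> \<sigma> \<gamma> \<rho> N p x \<and> x 0 \<in> Sigma_set N
              \<and> dist (x 0) (DFE \<mu> N p) < \<delta> \<longrightarrow> (\<forall>t\<ge>0. dist (x t) (DFE \<mu> N p) < \<epsilon>))
       \<and> (\<forall>x. seirv_solution \<mu> \<beta> \<sigma> \<gamma> \<rho> N p x \<and> x 0 \<in> Sigma_set N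
              \<longrightarrow> (x \<longlongrightarrow> DFE \<mu> N p) at_top)"
proof -
  define b where "b = \<beta> * (1 - \<rho>) / N"
  define q where "q = p / N"
  interpret seirv_subthreshold \<mu> N b q \<sigma> \<gamma>
    unfolding b_def q_def using assms(2-) by (intro seirv_subthreshold_if_R0_less_1)
  have DFE: "DFE \<mu> N p = P_dfe"
    using DFE_eq_P_dfe N_pos by (simp add: q_def)
  note trajectory = seirv_solution_trajectory[OF _ _ seirv_params_axioms[unfolded b_def q_def], folded b_def q_def]
  have components: "(fst (x t), fst (snd (x t)), fst (snd (snd (x t))), fst (snd (snd (snd (x t)))),
      snd (snd (snd (snd (x t))))) = x t" for x :: "real \<Rightarrow> state" and t
    by simp
  show ?thesis
  proof (intro conjI allI impI)
    fix \<epsilon> :: real assume "0 < \<epsilon>"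
    obtain \<delta> where "0 < \<delta>" and stable: "\<And>S E I R V t. seirv_trajectory \<mu> N b q \<sigma> \<gamma> S E I R V
        \<Longrightarrow> dist (S 0, E 0, I 0, R 0, V 0) P_dfe < \<delta> \<Longrightarrow> 0 \<le> t
        \<Longrightarrow> dist (S t, E t, I t, R t, V t) P_dfe < \<epsilon>"
      using P_dfe_stable[OF \<open>0 < \<epsilon>\<close>] by blast
    show "\<exists>\<delta>>0. \<forall>x. seirv_solution \<mu> \<beta> \<sigma> \<gamma> \<rho> N p x \<and> x 0 \<in> Sigma_set N
        \<and> dist (x 0) (DFE \<mu> N p) < \<delta> \<longrightarrow> (\<forall>t\<ge>0. dist (x t) (DFE \<mu> N p) < \<epsilon>)"
      using \<open>0 < \<delta>\<close> stable[OF trajectory] unfolding components DFE by blast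
  next
    fix x assume "seirv_solution \<mu> \<beta> \<sigma> \<gamma> \<rho> N p x \<and> x 0 \<in> Sigma_set N"
    then show "(x \<longlongrightarrow> DFE \<mu> N p) at_top"
      using P_dfe_attractive[OF trajectory] unfolding components DFE by blast
  qed
qed

end
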